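(* Let $\tau$ be an importance-inducing cooperative game mapping and $\mathfrak E$ an expectation of contributions. Then $\mathfrak E\circ\tau$, defined by $(\mathfrak E\circ\tau)_x(f)=\mathfrak E_x(\tau_f)$, is an importance value function. If $\tau$ is unbiased (resp. derivative dependent), then so is $\mathfrak E\circ\tau$. If $\tau$ is chain-rule decomposable (resp. weakly chain-rule decomposable), then so is $\mathbf{Bz}\circ\tau$.
   Context: $X$ is a fixed finite set of $n=|X|$ variables. An assignment over $U\subseteq X$ is a map $\mathbf u:U\to\{0,1\}$; $\mathbf u;\mathbf v$ is concatenation of assignments with disjoint domains, $\mathbf u_S$ is restriction. For $S\subseteq X$ and $\mathbf u$ over $X$, $\mathbf u^{\oplus S}$ flips the values of the variables in $S$. $\mathbb B(X)$ is the set of Boolean functions $\{0,1\}^X\to\{0,1\}$, combined pointwise by $\lor,\land$ (juxtaposition), $\oplus$, negation $\overline f$; a variable $x$ also denotes $\mathbf u\mapsto\mathbf u(x)$; $f\ge g$ is pointwise. Cofactor: $f_{\mathbf v}(\mathbf u)=f(\mathbf v;\mathbf u_{X\setminus V})$ for $\mathbf v$ over $V$; $f_{x/c}$ for $V=\{x\}$. $\mathrm{dep}(f)=\{x: f_{x/1}\ne f_{x/0}\}$; $f$ is monotone in $x$ if $f_{x/1}\ge f_{x/0}$. $f^{\oplus y}(\mathbf u)=f(\mathbf u^{\oplus\{y\}})$. For a permutation $\sigma$ of $X$: $(\sigma\mathbf u)(x)=\mathbf u(\sigma^{-1}(x))$, $(\sigma f)(\mathbf u)=f(\sigma^{-1}\mathbf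 u)$. $f[x/s]=s f_{x/1}\lor\overline s f_{x/0}$; $\mathrm D_xf=f_{x/1}\oplus f_{x/0}$. Modularity: $f$ is modular in $g$ if $g$ is not constant and there are $\ell\in\mathbb B(X)$, $z\in X$ with $\mathrm{dep}(\ell)\cap\mathrm{dep}(g)=\emptyset$ and $f=\ell[z/g]$; monotonically modular if moreover $\ell$ is monotone in $z$. Then $f_{g/1}:=\ell_{z/1}$, $f_{g/0}:=\ell_{z/0}$ (well defined), and for a variable $w$, $f[g/w]:=w f_{g/1}\lor\overline w f_{g/0}$. Value functions and IVFs: a value function is a map $\mathfrak I:X\times\mathbb B(X)\to\mathbb R$. It is an importance value function (IVF) if for all $x,y\in X$, permutations $\sigma$, $f,g,h$: (Bound) $0\le\mathfrak I_x(f)\le1$; (Dum) $\mathfrak I_x(f)=0$ if $x\notin\mathrm{dep}(f)$; (Dic) $\mathfrak I_x(x)=\mathfrak I_x(\overline x)=1$; (Type) $\mathfrak I_x(f)=\mathfrak I_{\sigma(x)}(\sigma f)$ and $\mathfrak I_x(f)=\mathfrak I_x(f^{\oplus y})$; (ModEC) $\mathfrak I_x(f)\ge\mathfrak I_x(h)$ whenever $f,h$ are monotonically modular in $g$, $f_{g/1}\ge h_{g/1}$, $h_{g/0}\ge f_{g/0}$, $x\in\mathrm{dep}(g)$. Unbiased: $\mathfrak I_x(g)=\mathfrak I_x(\overline g)$. Derivative dependent: $\mathrm D_xf\ge\mathrm D_xg\Rightarrow\mathfrak I_x(f)\ge\mathfrak I_x(g)$. Chain-rule decomposable: for $f$ modular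 in $g$ and $x\in\mathrm{dep}(g)$, $\mathfrak I_x(f)=\mathfrak I_x(g)\,\mathfrak I_{x_g}(f[g/x_g])$ for a variable $x_g\notin\mathrm{dep}(f)$; weakly: only for $f$ monotonically modular in $g$. Cooperative games: a cooperative game is $v:2^X\to\mathbb R$; $\mathbb G(X)$ is the set of all of them; they are combined pointwise and compared pointwise. $\partial_xv(S)=v(S\cup\{x\})-v(S\setminus\{x\})$. A cooperative game mapping (CGM) is a map $\tau:\mathbb B(X)\to\mathbb G(X)$, $f\mapsto\tau_f$. It is importance inducing if for all $x,y\in X$, permutations $\sigma$ and $f,g,h$: (Bound$_{CG}$) $0\le\partial_x\tau_f\le1$; (Dum$_{CG}$) $\partial_x\tau_f=0$ if $x\notin\mathrm{dep}(f)$; (Dic$_{CG}$) $\partial_x\tau_x=\partial_x\tau_{\overline x}=1$; (Type$_{CG}$) $\tau_f(S)=\tau_{\sigma f}(\sigma(S))$ and $\tau_f(S)=\tau_{f^{\oplus y}}(S)$ for all $S\subseteq X$; (ModEC$_{CG}$) $\partial_x\tau_f\ge\partial_x\tau_h$ whenever $f,h$ are monotonically modular in $g$, $f_{g/1}\ge h_{g/1}$, $h_{g/0}\ge f_{g/0}$, $x\in\mathrm{dep}(g)$. $\tau$ is unbiased if $\tau_g=\tau_{\overline g}$ for all $g$; derivative dependent if $\mathrm D_xf\ge\mathrm D_xg\Rightarrow\partial_x\tau_f\ge\partial_x\tau_g$; chain-rule decomposable if for all $f$ modular in $g$ and $x\in\mathrm{dep}(g)$: $\partial_x\tau_f=(\partial_x\tau_g)(\partial_g\tau_f)$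 with $\partial_g\tau_f:=\partial_{x_g}\tau_{f[g/x_g]}$ for a variable $x_g\notin\mathrm{dep}(f)$; weakly chain-rule decomposable if this holds whenever $f$ is monotonically modular in $g$. An expectation of contributions is a map $\mathfrak E:X\times\mathbb G(X)\to\mathbb R$ for which there are nonnegative weights $c(0),\dots,c(n-1)$ with $\sum_{S\subseteq X\setminus\{x\}}c(|S|)=1$ and $\mathfrak E_x(v)=\sum_{S\subseteq X\setminus\{x\}}c(|S|)\,\partial_xv(S)$ for all $v,x$. The Banzhaf value $\mathbf{Bz}$ is the expectation of contributions with $c(k)=2^{-(n-1)}$. *)

theory Defs
  imports Complex_Main
begin

text \<open>Variables form a finite type 'x (the set X is UNIV). Assignments over X are
 maps 'x => bool; Boolean functions are ('x => bool) => bool, ordered pointwise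
 (False < True).\<close>

type_synonym 'x bfun = "('x \<Rightarrow> bool) \<Rightarrow> bool"
type_synonym 'x game = "'x set \<Rightarrow> real"

definition cof :: "'x bfun \<Rightarrow> 'x \<Rightarrow> bool \<Rightarrow> 'x bfun" where
  "cof f x c = (\<lambda>u. f (u(x := c)))"

definition dep :: "'x bfun \<Rightarrow> 'x set" where
  "dep f = {x. cof f x True \<noteq> cof f x False}"

definition monotone_in :: "'x bfun \<Rightarrow> 'x \<Rightarrow> bool" where
  "monotone_in f x \<longleftrightarrow> cof f x False \<le> cof f x True"

definition flip :: "'x bfun \<Rightarrow> 'x \<Rightarrow> 'x bfun" where
  "flip f y = (\<lambda>u. f (u(y := \<not> u y)))"

text \<open>(sigma f)(u) = f(sigma^-1 u), where (sigma^-1 u)(x) = u(sigma x).\<close>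
definition perm_bfun :: "('x \<Rightarrow> 'x) \<Rightarrow> 'x bfun \<Rightarrow> 'x bfun" where
  "perm_bfun \<sigma> f = (\<lambda>u. f (u \<circ> \<sigma>))"

definition subst :: "'x bfun \<Rightarrow> 'x \<Rightarrow> 'x bfun \<Rightarrow> 'x bfun" where
  "subst f x s = (\<lambda>u. (s u \<and> cof f x True u) \<or> (\<not> s u \<and> cof f x False u))"

definition Dx :: "'x \<Rightarrow> 'x bfun \<Rightarrow> 'x bfun" where
  "Dx x f = (\<lambda>u. cof f x True u \<noteq> cof f x False u)"

definition var :: "'x \<Rightarrow> 'x bfun" where
  "var x = (\<lambda>u. u x)"

definition nonconst :: "'x bfun \<Rightarrow> bool" where
  "nonconst g \<longleftrightarrow> (\<exists>u v. g u \<noteq> g v)"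

definition mod_witness :: "'x bfun \<Rightarrow> 'x bfun \<Rightarrow> 'x bfun \<Rightarrow> 'x \<Rightarrow> bool" where
  "mod_witness f g l z \<longleftrightarrow> dep l \<inter> dep g = {} \<and> f = subst l z g"

definition modular :: "'x bfun \<Rightarrow> 'x bfun \<Rightarrow> bool" where
  "modular f g \<longleftrightarrow> nonconst g \<and> (\<exists>l z. mod_witness f g l z)"

definition mono_modular :: "'x bfun \<Rightarrow> 'x bfun \<Rightarrow> bool" where
  "mono_modular f g \<longleftrightarrow> nonconst g \<and> (\<exists>l z. mod_witness f g l z \<and> monotone_in l z)"

text \<open>f_{g/c} := l_{z/c} for a witness (l,z) (well defined by the paper).\<close>
definition mod_cof :: "'x bfun \<Rightarrow> 'x bfun \<Rightarrow> bool \<Rightarrow> 'x bfun" where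
  "mod_cof f g c = (let w = (SOME w. mod_witness f g (fst w) (snd w)) in cof (fst w) (snd w) c)"

definition mod_subst :: "'x bfun \<Rightarrow> 'x bfun \<Rightarrow> 'x \<Rightarrow> 'x bfun" where
  "mod_subst f g w = (\<lambda>u. (u w \<and> mod_cof f g True u) \<or> (\<not> u w \<and> mod_cof f g False u))"

type_synonym 'x valfun = "'x \<Rightarrow> 'x bfun \<Rightarrow> real"

definition IVF :: "('x::finite) valfun \<Rightarrow> bool" where
  "IVF I \<longleftrightarrow>
     (\<forall>x f. 0 \<le> I x f \<and> I x f \<le> 1) \<and>
     (\<forall>x f. x \<notin> dep f \<longrightarrow> I x f = 0) \<and>
     (\<forall>x. I x (var x) = 1 \<and> I x (\<lambda>u. \<not> var x u) = 1) \<and>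
     (\<forall>x f \<sigma>. bij \<sigma> \<longrightarrow> I x f = I (\<sigma> x) (perm_bfun \<sigma> f)) \<and>
     (\<forall>x y f. I x f = I x (flip f y)) \<and>
     (\<forall>x f g h. mono_modular f g \<and> mono_modular h g \<and>
        mod_cof h g True \<le> mod_cof f g True \<and>
        mod_cof f g False \<le> mod_cof h g False \<and> x \<in> dep g \<longrightarrow> I x h \<le> I x f)"

definition unbiased :: "('x::finite) valfun \<Rightarrow> bool" where
  "unbiased I \<longleftrightarrow> (\<forall>x g. I x g = I x (\<lambda>u. \<not> g u))"

definition deriv_dependent :: "('x::finite) valfun \<Rightarrow> bool" where
  "deriv_dependent I \<longleftrightarrow> (\<forall>x f g. Dx x g \<le> Dx x f \<longrightarrow> I x g \<le> I x f)"

definition chain_rule_decomp :: "('x::finite) valfun \<Rightarrow> bool" where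
  "chain_rule_decomp I \<longleftrightarrow> (\<forall>f g x xg. modular f g \<and> x \<in> dep g \<and> xg \<notin> dep f \<longrightarrow>
      I x f = I x g * I xg (mod_subst f g xg))"

definition weak_chain_rule_decomp :: "('x::finite) valfun \<Rightarrow> bool" where
  "weak_chain_rule_decomp I \<longleftrightarrow> (\<forall>f g x xg. mono_modular f g \<and> x \<in> dep g \<and> xg \<notin> dep f \<longrightarrow>
      I x f = I x g * I xg (mod_subst f g xg))"

definition pd :: "'x \<Rightarrow> 'x game \<Rightarrow> 'x game" where
  "pd x v = (\<lambda>S. v (S \<union> {x}) - v (S - {x}))"

type_synonym 'x cgm = "'x bfun \<Rightarrow> 'x game"

definition importance_inducing :: "('x::finite) cgm \<Rightarrow> bool" where
  "importance_inducing \<tau> \<longleftrightarrow>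
     (\<forall>x f S. 0 \<le> pd x (\<tau> f) S \<and> pd x (\<tau> f) S \<le> 1) \<and>
     (\<forall>x f. x \<notin> dep f \<longrightarrow> pd x (\<tau> f) = (\<lambda>S. 0)) \<and>
     (\<forall>x. pd x (\<tau> (var x)) = (\<lambda>S. 1) \<and> pd x (\<tau> (\<lambda>u. \<not> var x u)) = (\<lambda>S. 1)) \<and>
     (\<forall>f \<sigma> S. bij \<sigma> \<longrightarrow> \<tau> f S = \<tau> (perm_bfun \<sigma> f) (\<sigma> ` S)) \<and>
     (\<forall>y f S. \<tau> f S = \<tau> (flip f y) S) \<and>
     (\<forall>x f g h. mono_modular f g \<and> mono_modular h g \<and>
        mod_cof h g True \<le> mod_cof f g True \<and>
        mod_cof f g False \<le> mod_cof h g False \<and> x \<in> dep g \<longrightarrow>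
        pd x (\<tau> h) \<le> pd x (\<tau> f))"

definition unbiased_cgm :: "('x::finite) cgm \<Rightarrow> bool" where
  "unbiased_cgm \<tau> \<longleftrightarrow> (\<forall>g. \<tau> g = \<tau> (\<lambda>u. \<not> g u))"

definition deriv_dependent_cgm :: "('x::finite) cgm \<Rightarrow> bool" where
  "deriv_dependent_cgm \<tau> \<longleftrightarrow> (\<forall>x f g. Dx x g \<le> Dx x f \<longrightarrow> pd x (\<tau> g) \<le> pd x (\<tau> f))"

definition chain_rule_decomp_cgm :: "('x::finite) cgm \<Rightarrow> bool" where
  "chain_rule_decomp_cgm \<tau> \<longleftrightarrow> (\<forall>f g x xg. modular f g \<and> x \<in> dep g \<and> xg \<notin> dep f \<longrightarrow>
      pd x (\<tau> f) = (\<lambda>S. pd x (\<tau> g) S * pd xg (\<tau> (mod_subst f g xg)) S))"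

definition weak_chain_rule_decomp_cgm :: "('x::finite) cgm \<Rightarrow> bool" where
  "weak_chain_rule_decomp_cgm \<tau> \<longleftrightarrow> (\<forall>f g x xg. mono_modular f g \<and> x \<in> dep g \<and> xg \<notin> dep f \<longrightarrow>
      pd x (\<tau> f) = (\<lambda>S. pd x (\<tau> g) S * pd xg (\<tau> (mod_subst f g xg)) S))"

definition expectation_of_contributions :: "(('x::finite) \<Rightarrow> 'x game \<Rightarrow> real) \<Rightarrow> bool" where
  "expectation_of_contributions E \<longleftrightarrow>
     (\<exists>c :: nat \<Rightarrow> real.
        (\<forall>(x::'x) S. S \<subseteq> UNIV - {x} \<longrightarrow> 0 \<le> c (card S)) \<and>
        (\<forall>x::'x. (\<Sum>S \<in> Pow (UNIV - {x}). c (card S)) = 1) \<and>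
        (\<forall>x v. E x v = (\<Sum>S \<in> Pow (UNIV - {x}). c (card S) * pd x v S)))"

definition banzhaf :: "'x::finite \<Rightarrow> 'x game \<Rightarrow> real" where
  "banzhaf x v = (\<Sum>S \<in> Pow (UNIV - {x}). (1 / 2 ^ card (UNIV - {x})) * pd x v S)"

definition comp_vf :: "('x \<Rightarrow> 'x game \<Rightarrow> real) \<Rightarrow> 'x cgm \<Rightarrow> 'x valfun" where
  "comp_vf E \<tau> = (\<lambda>x f. E x (\<tau> f))"

end

theory Submission
  imports Defs
begin

text \<open>An expectation of contributions averages the marginal contributions \<open>\<partial>\<^sub>x v(S)\<close> over
  the coalitions \<open>S\<close> with nonnegative weights of total mass one that depend only on \<open>|S|\<close>.
  Hence bounds, constant values and pointwise inequalities of the games \<open>\<partial>\<^sub>x \<tau>\<^sub>f\<close> carry over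
  to \<open>\<E> \<circ> \<tau>\<close>, and renaming the variables permutes the coalitions without changing their
  sizes; this transfers all axioms, unbiasedness and derivative dependence.

  The chain rule needs the uniform weights of the Banzhaf value. By the dummy axiom, the
  first factor \<open>\<partial>\<^sub>x \<tau>\<^sub>g(S)\<close> of the pointwise chain rule depends only on \<open>S \<inter> dep g\<close>, the second
  one only on \<open>S \<inter> dep f[g/x\<^sub>g]\<close>. These sets are disjoint, so the uniform average of the
  product factors into the product of the averages.\<close>

lemma sum_Pow_split:
  assumes "finite U"
  shows "(\<Sum>S\<in>Pow U. F (S \<inter> P) (S - P)) = (\<Sum>S\<^sub>1\<in>Pow (U \<inter> P). \<Sum>S\<^sub>2\<in>Pow (U - P). F S\<^sub>1 S\<^sub>2)"
proof -
  have "bij_betw (\<lambda>S. (S \<inter> P, S - P)) (Pow U) (Pow (U \<inter> P) \<times> Pow (U - P))"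
    by (rule bij_betw_byWitness[where f' = "\<lambda>(S\<^sub>1, S\<^sub>2). S\<^sub>1 \<union> S\<^sub>2"]) auto
  from sum.reindex_bij_betw[OF this, of "case_prod F"]
  have "(\<Sum>S\<in>Pow U. F (S \<inter> P) (S - P)) = (\<Sum>(S\<^sub>1, S\<^sub>2)\<in>Pow (U \<inter> P) \<times> Pow (U - P). F S\<^sub>1 S\<^sub>2)"
    by simp
  also have "\<dots> = (\<Sum>S\<^sub>1\<in>Pow (U \<inter> P). \<Sum>S\<^sub>2\<in>Pow (U - P). F S\<^sub>1 S\<^sub>2)"
    by (rule sum.cartesian_product[symmetric])
  finally show ?thesis .
qed

lemma sum_Pow_restrict:
  fixes A :: "'a set \<Rightarrow> 'b::comm_semiring_1"
  assumes "finite U" "\<And>S. A S = A (S \<inter> P)"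
  shows "(\<Sum>S\<in>Pow U. A S) = 2 ^ card (U - P) * (\<Sum>S\<in>Pow (U \<inter> P). A S)"
proof -
  have "(\<Sum>S\<in>Pow U. A S) = (\<Sum>S\<in>Pow U. (\<lambda>S\<^sub>1 S\<^sub>2. A S\<^sub>1) (S \<inter> P) (S - P))"
    using assms(2) by simp
  also have "\<dots> = (\<Sum>S\<^sub>1\<in>Pow (U \<inter> P). \<Sum>S\<^sub>2\<in>Pow (U - P). A S\<^sub>1)"
    by (rule sum_Pow_split[OF assms(1)])
  finally show ?thesis
    using assms(1) by (simp add: card_Pow sum_distrib_left)
qed

lemma sum_Pow_mult_of_disjoint_support:
  fixes A B :: "'a set \<Rightarrow> 'b::comm_semiring_1"
  assumes "finite U" "P \<inter> Q = {}"
    and A: "\<And>S. A S = A (S \<inter> P)" and B: "\<And>S. B S = B (S \<inter> Q)"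
  shows "2 ^ card U * (\<Sum>S\<in>Pow U. A S * B S) = (\<Sum>S\<in>Pow U. A S) * (\<Sum>S\<in>Pow U. B S)"
proof -
  have B': "B S = B (S \<inter> - P)" for S
  proof -
    have "S \<inter> - P \<inter> Q = S \<inter> Q"
      using assms(2) by blast
    then show ?thesis
      using B[of S] B[of "S \<inter> - P"] by simp
  qed
  have "(\<Sum>S\<in>Pow U. A S * B S) = (\<Sum>S\<in>Pow U. (\<lambda>S\<^sub>1 S\<^sub>2. A S\<^sub>1 * B S\<^sub>2) (S \<inter> P) (S - P))"
    using A B' by (metis Diff_eq)
  also have "\<dots> = (\<Sum>S\<in>Pow (U \<inter> P). A S) * (\<Sum>S\<in>Pow (U - P). B S)"
    using sum_Pow_split[OF assms(1), of "\<lambda>S\<^sub>1 S\<^sub>2. A S\<^sub>1 * B S\<^sub>2"] by (simp only: sum_product)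
  finally have prod: "(\<Sum>S\<in>Pow U. A S * B S) = (\<Sum>S\<in>Pow (U \<inter> P). A S) * (\<Sum>S\<in>Pow (U - P). B S)" .
  have "(\<Sum>S\<in>Pow U. B S) = 2 ^ card (U \<inter> P) * (\<Sum>S\<in>Pow (U - P). B S)"
    using sum_Pow_restrict[of U B "- P"] assms(1) B' by (simp add: Diff_eq)
  moreover have "card U = card (U \<inter> P) + card (U - P)"
    using assms(1) by (metis card_Int_Diff)
  ultimately show ?thesis
    unfolding prod sum_Pow_restrict[of U A P, OF assms(1) A] by (simp add: power_add algebra_simps)
qed

lemma null_player_remove:
  assumes "pd w v = (\<lambda>S. 0)"
  shows "v (S - {w}) = v S"
proof -
  have "v (S \<union> {w}) = v (S - {w})"
    using fun_cong[OF assms, of S] unfolding pd_def by simp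
  then show ?thesis
    by (cases "w \<in> S") (simp_all add: insert_absorb)
qed

lemma null_players_remove:
  assumes "finite T" "\<And>w. w \<in> T \<Longrightarrow> pd w v = (\<lambda>S. 0)"
  shows "v (S - T) = v S"
  using assms
proof (induction T rule: finite_induct)
  case (insert a T)
  have "v (S - insert a T) = v (S - T - {a})"
    by (simp only: Diff_insert[of S a T])
  also have "\<dots> = v (S - T)"
    using insert.prems by (intro null_player_remove) simp
  also have "\<dots> = v S"
    using insert by simp
  finally show ?case .
qed simp

lemma game_eq_if_eq_on_non_null:
  fixes v :: "('x::finite) game"
  assumes null: "\<And>w. w \<notin> D \<Longrightarrow> pd w v = (\<lambda>S. 0)" and "S \<inter> D = T \<inter> D"
  shows "v S = v T"
proof -
  have "v (X \<inter> D) = v X" for X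
    using null_players_remove[of "X - D" v X] null by (simp add: Diff_Diff_Int)
  then show ?thesis
    using assms(2) by metis
qed

lemma pd_restrict_to_non_null:
  fixes v :: "('x::finite) game"
  assumes "\<And>w. w \<notin> D \<Longrightarrow> pd w v = (\<lambda>S. 0)"
  shows "pd y v S = pd y v (S \<inter> D)"
proof -
  have "v (S \<union> {y}) = v (S \<inter> D \<union> {y})" "v (S - {y}) = v (S \<inter> D - {y})"
    by (rule game_eq_if_eq_on_non_null[OF assms]; auto)+
  then show ?thesis
    unfolding pd_def by simp
qed

lemma banzhaf_eq_sum_Pow_UNIV:
  fixes x :: "'x::finite"
  shows "banzhaf x v = (\<Sum>S\<in>Pow UNIV. pd x v S) / 2 ^ card (UNIV :: 'x set)"
proof -
  have "pd x v S = pd x v (S \<inter> - {x})" for S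
  proof -
    have "S \<union> {x} = S \<inter> - {x} \<union> {x}" "S - {x} = S \<inter> - {x} - {x}"
      by auto
    then show ?thesis
      unfolding pd_def by metis
  qed
  then have "(\<Sum>S\<in>Pow UNIV. pd x v S) = 2 * (\<Sum>S\<in>Pow (UNIV - {x}). pd x v S)"
    using sum_Pow_restrict[of UNIV "pd x v" "- {x}"] by (simp add: Compl_eq_Diff_UNIV Diff_Diff_Int)
  moreover have "card (UNIV :: 'x set) = Suc (card (UNIV - {x}))"
    using card_gt_0_iff[of "UNIV :: 'x set"] by (simp add: card_Diff_singleton)
  ultimately show ?thesis
    unfolding banzhaf_def sum_distrib_left[symmetric] by (simp only: power_Suc) simp
qed

lemma dep_iff: "x \<in> dep f \<longleftrightarrow> (\<exists>u. f (u(x := True)) \<noteq> f (u(x := False)))"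
  unfolding dep_def cof_def fun_eq_iff by simp

lemma notin_dep_iff: "x \<notin> dep f \<longleftrightarrow> (\<forall>u b. f (u(x := b)) = f u)"
proof
  assume "x \<notin> dep f"
  then have "f (u(x := b)) = f (u(x := c))" for u b c
    unfolding dep_iff by (cases b; cases c) auto
  then show "\<forall>u b. f (u(x := b)) = f u"
    by (metis fun_upd_triv)
next
  assume "\<forall>u b. f (u(x := b)) = f u"
  then show "x \<notin> dep f"
    unfolding dep_iff by simp
qed

lemma override_on_notin_dep:
  assumes "finite T" "T \<inter> dep f = {}"
  shows "f (override_on u u' T) = f u"
  using assms
proof (induction T rule: finite_induct)
  case (insert a T)
  have "override_on u u' (insert a T) = (override_on u u' T)(a := u' a)"
    by (auto simp: override_on_def fun_eq_iff)
  then have "f (override_on u u' (insert a T)) = f (override_on u u' T)"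
    using insert.prems notin_dep_iff[of a f] by simp
  also have "\<dots> = f u"
    using insert by blast
  finally show ?case .
qed simp

lemma eq_if_eq_on_dep:
  fixes f :: "('x::finite) bfun"
  assumes "\<And>w. w \<in> dep f \<Longrightarrow> u w = u' w"
  shows "f u = f u'"
proof -
  have "override_on u u' {w. u w \<noteq> u' w} = u'"
    by (auto simp: override_on_def)
  moreover have "{w. u w \<noteq> u' w} \<inter> dep f = {}"
    using assms by blast
  ultimately show ?thesis
    using override_on_notin_dep[of "{w. u w \<noteq> u' w}" f u u'] by simp
qed

lemma subst_notin_dep:
  assumes "z \<notin> dep l"
  shows "subst l z s = l"
  using assms unfolding notin_dep_iff by (auto simp: subst_def cof_def fun_eq_iff)

lemma dep_var_subset: "dep (var x) \<subseteq> {x}"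
  unfolding dep_def cof_def var_def by auto

lemma dep_subst_subset: "dep (subst l z s) \<subseteq> (dep l - {z}) \<union> dep s"
proof
  fix w
  assume w: "w \<in> dep (subst l z s)"
  show "w \<in> (dep l - {z}) \<union> dep s"
  proof (rule ccontr)
    assume "w \<notin> (dep l - {z}) \<union> dep s"
    then have "w \<notin> dep s" and "w \<noteq> z \<Longrightarrow> w \<notin> dep l"
      by auto
    then have s: "s (u(w := b)) = s u" and l: "w \<noteq> z \<Longrightarrow> l (u(w := b)) = l u" for u b
      unfolding notin_dep_iff by auto
    have "cof l z c (u(w := b)) = cof l z c u" for c u b
      unfolding cof_def using l by (cases "w = z") (simp, metis fun_upd_twist)
    then have "subst l z s (u(w := b)) = subst l z s u" for u b
      unfolding subst_def using s by simp
    then have "w \<notin> dep (subst l z s)"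
      unfolding notin_dep_iff by blast
    then show False
      using w by contradiction
  qed
qed

lemma dep_subset_dep_subst:
  fixes l g :: "('x::finite) bfun"
  assumes disj: "dep l \<inter> dep g = {}" and z: "z \<in> dep l"
  shows "dep g \<subseteq> dep (subst l z g)"
proof
  fix y
  assume y: "y \<in> dep g"
  obtain u\<^sub>l where u\<^sub>l: "l (u\<^sub>l(z := True)) \<noteq> l (u\<^sub>l(z := False))"
    using z unfolding dep_iff by blast
  obtain u\<^sub>g where u\<^sub>g: "g (u\<^sub>g(y := True)) \<noteq> g (u\<^sub>g(y := False))"
    using y unfolding dep_iff by blast
  define u where "u w = (if w \<in> dep g then u\<^sub>g w else u\<^sub>l w)" for w
  have "l (u(y := b, z := c)) = l (u\<^sub>l(z := c))" for b c
    by (rule eq_if_eq_on_dep[of l]) (use disj y in \<open>auto simp: u_def\<close>)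
  moreover have "g (u(y := b)) = g (u\<^sub>g(y := b))" for b
    by (rule eq_if_eq_on_dep[of g]) (auto simp: u_def)
  ultimately have "subst l z g (u(y := b)) = (if g (u\<^sub>g(y := b)) then l (u\<^sub>l(z := True)) else l (u\<^sub>l(z := False)))" for b
    unfolding subst_def cof_def by auto
  then have "subst l z g (u(y := True)) \<noteq> subst l z g (u(y := False))"
    using u\<^sub>l u\<^sub>g by auto
  then show "y \<in> dep (subst l z g)"
    unfolding dep_iff by blast
qed

lemma mono_modular_imp_modular: "mono_modular f g \<Longrightarrow> modular f g"
  unfolding mono_modular_def modular_def by blast

lemma mod_subst_eq_subst_var:
  assumes "modular f g"
  obtains l z where "mod_witness f g l z" "mod_subst f g w = subst l z (var w)"
proof -
  define lz where "lz = (SOME lz. mod_witness f g (fst lz) (snd lz))"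
  have "mod_witness f g (fst lz) (snd lz)"
    unfolding lz_def using assms unfolding modular_def by (metis (mono_tags) someI_ex fst_conv snd_conv)
  moreover have "mod_subst f g w = subst (fst lz) (snd lz) (var w)"
    unfolding mod_subst_def mod_cof_def subst_def var_def lz_def Let_def ..
  ultimately show ?thesis
    using that by blast
qed

lemma dep_mod_subst_disjoint:
  fixes f g :: "('x::finite) bfun"
  assumes "modular f g" "x\<^sub>g \<notin> dep f"
  shows "dep (mod_subst f g x\<^sub>g) \<inter> dep g = {}"
proof -
  obtain l z where w: "mod_witness f g l z" and h: "mod_subst f g x\<^sub>g = subst l z (var x\<^sub>g)"
    using assms(1) by (rule mod_subst_eq_subst_var)
  have disj: "dep l \<inter> dep g = {}" and f: "f = subst l z g"
    using w unfolding mod_witness_def by auto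
  show ?thesis
  proof (cases "z \<in> dep l")
    case True
    then have "x\<^sub>g \<notin> dep g"
      using dep_subset_dep_subst[OF disj] assms(2) f by blast
    then show ?thesis
      unfolding h using dep_subst_subset[of l z "var x\<^sub>g"] dep_var_subset[of x\<^sub>g] disj by blast
  next
    case False
    show ?thesis
      unfolding h subst_notin_dep[OF False] by (rule disj)
  qed
qed

lemma banzhaf_mult_of_disjoint_non_null:
  fixes v v\<^sub>1 v\<^sub>2 :: "('x::finite) game"
  assumes "\<And>w. w \<notin> D\<^sub>1 \<Longrightarrow> pd w v\<^sub>1 = (\<lambda>S. 0)" "\<And>w. w \<notin> D\<^sub>2 \<Longrightarrow> pd w v\<^sub>2 = (\<lambda>S. 0)"
    and "D\<^sub>1 \<inter> D\<^sub>2 = {}"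
    and pd: "pd x v = (\<lambda>S. pd x v\<^sub>1 S * pd y v\<^sub>2 S)"
  shows "banzhaf x v = banzhaf x v\<^sub>1 * banzhaf y v\<^sub>2"
proof -
  define N :: real where "N = 2 ^ card (UNIV :: 'x set)"
  have "N * (\<Sum>S\<in>Pow UNIV. pd x v\<^sub>1 S * pd y v\<^sub>2 S) = (\<Sum>S\<in>Pow UNIV. pd x v\<^sub>1 S) * (\<Sum>S\<in>Pow UNIV. pd y v\<^sub>2 S)"
    unfolding N_def
    using sum_Pow_mult_of_disjoint_support[OF finite_UNIV assms(3), of "pd x v\<^sub>1" "pd y v\<^sub>2"]
      pd_restrict_to_non_null[OF assms(1)] pd_restrict_to_non_null[OF assms(2)] by blast
  moreover have "N > 0"
    unfolding N_def by simp
  ultimately show ?thesis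
    unfolding banzhaf_eq_sum_Pow_UNIV pd N_def[symmetric] by (simp add: field_simps)
qed

lemma pd_eq_0_if_notin_dep:
  assumes "importance_inducing \<tau>" "w \<notin> dep f"
  shows "pd w (\<tau> f) = (\<lambda>S. 0)"
  using assms unfolding importance_inducing_def by blast

lemma banzhaf_chain_rule:
  fixes \<tau> :: "('x::finite) cgm"
  assumes "importance_inducing \<tau>" "modular f g" "x\<^sub>g \<notin> dep f"
    and "pd x (\<tau> f) = (\<lambda>S. pd x (\<tau> g) S * pd x\<^sub>g (\<tau> (mod_subst f g x\<^sub>g)) S)"
  shows "banzhaf x (\<tau> f) = banzhaf x (\<tau> g) * banzhaf x\<^sub>g (\<tau> (mod_subst f g x\<^sub>g))"
  using banzhaf_mult_of_disjoint_non_null[OF pd_eq_0_if_notin_dep[OF assms(1)] pd_eq_0_if_notin_dep[OF assms(1)] _ assms(4)]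
    dep_mod_subst_disjoint[OF assms(2,3)] by blast

lemma expectation_of_contributionsE:
  fixes E :: "'x::finite \<Rightarrow> 'x game \<Rightarrow> real"
  assumes "expectation_of_contributions E"
  obtains c :: "nat \<Rightarrow> real"
  where "\<And>(x::'x) S. S \<subseteq> UNIV - {x} \<Longrightarrow> 0 \<le> c (card S)"
    and "\<And>x::'x. (\<Sum>S\<in>Pow (UNIV - {x}). c (card S)) = 1"
    and "\<And>x v. E x v = (\<Sum>S\<in>Pow (UNIV - {x}). c (card S) * pd x v S)"
  using assms unfolding expectation_of_contributions_def by blast

lemma expectation_of_contributions_bounds:
  fixes E :: "'x::finite \<Rightarrow> 'x game \<Rightarrow> real"
  assumes "expectation_of_contributions E" "\<And>S. a \<le> pd x v S" "\<And>S. pd x v S \<le> b"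
  shows "a \<le> E x v \<and> E x v \<le> b"
proof -
  obtain c where c0: "\<And>(x::'x) S. S \<subseteq> UNIV - {x} \<Longrightarrow> 0 \<le> c (card S)"
    and c1: "\<And>x::'x. (\<Sum>S\<in>Pow (UNIV - {x}). c (card S)) = 1"
    and E: "\<And>x v. E x v = (\<Sum>S\<in>Pow (UNIV - {x}). c (card S) * pd x v S)"
    using assms(1) by (elim expectation_of_contributionsE) auto
  have "(\<Sum>S\<in>Pow (UNIV - {x}). c (card S) * r) = r" for r
    by (simp only: sum_distrib_right[symmetric] c1 mult_1)
  moreover have "(\<Sum>S\<in>Pow (UNIV - {x}). c (card S) * a) \<le> E x v"
    unfolding E by (intro sum_mono mult_left_mono assms(2)) (simp add: c0)
  moreover have "E x v \<le> (\<Sum>S\<in>Pow (UNIV - {x}). c (card S) * b)"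
    unfolding E by (intro sum_mono mult_left_mono assms(3)) (simp add: c0)
  ultimately show ?thesis
    by simp
qed

lemma expectation_of_contributions_const:
  fixes E :: "'x::finite \<Rightarrow> 'x game \<Rightarrow> real"
  assumes "expectation_of_contributions E" "pd x v = (\<lambda>S. r)"
  shows "E x v = r"
  using expectation_of_contributions_bounds[OF assms(1), of r x v r] assms(2) by simp

lemma expectation_of_contributions_mono:
  fixes E :: "'x::finite \<Rightarrow> 'x game \<Rightarrow> real"
  assumes "expectation_of_contributions E" "\<And>S. pd x v S \<le> pd x w S"
  shows "E x v \<le> E x w"
proof -
  obtain c where c0: "\<And>(x::'x) S. S \<subseteq> UNIV - {x} \<Longrightarrow> 0 \<le> c (card S)"
    and E: "\<And>x v. E x v = (\<Sum>S\<in>Pow (UNIV - {x}). c (card S) * pd x v S)"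
    using assms(1) by (elim expectation_of_contributionsE) auto
  show ?thesis
    unfolding E by (intro sum_mono mult_left_mono assms(2)) (simp add: c0)
qed

lemma expectation_of_contributions_perm:
  fixes E :: "'x::finite \<Rightarrow> 'x game \<Rightarrow> real"
  assumes "expectation_of_contributions E" "bij \<sigma>" "\<And>S. w (\<sigma> ` S) = v S"
  shows "E (\<sigma> x) w = E x v"
proof -
  obtain c where E: "\<And>x v. E x v = (\<Sum>S\<in>Pow (UNIV - {x}). c (card S) * pd x v S)"
    using assms(1) by (elim expectation_of_contributionsE) auto
  have inj: "inj \<sigma>"
    using assms(2) by (rule bij_is_inj)
  have "bij_betw \<sigma> (UNIV - {x}) (UNIV - {\<sigma> x})"
    using assms(2) unfolding bij_betw_def bij_def inj_on_def by (auto simp: image_iff)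
  then have bij_Pow: "bij_betw (image \<sigma>) (Pow (UNIV - {x})) (Pow (UNIV - {\<sigma> x}))"
    by (rule bij_betw_Pow)
  have "pd (\<sigma> x) w (\<sigma> ` S) = pd x v S" for S
  proof -
    have "\<sigma> ` S \<union> {\<sigma> x} = \<sigma> ` (S \<union> {x})" "\<sigma> ` S - {\<sigma> x} = \<sigma> ` (S - {x})"
      using inj by (auto simp: image_set_diff)
    then show ?thesis
      unfolding pd_def using assms(3)[of "S \<union> {x}"] assms(3)[of "S - {x}"] by simp
  qed
  moreover have "card (\<sigma> ` S) = card S" for S
    using inj by (simp add: card_image inj_on_subset)
  ultimately show ?thesis
    unfolding E using sum.reindex_bij_betw[OF bij_Pow, of "\<lambda>S. c (card S) * pd (\<sigma> x) w S"] by simp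
qed

lemma IVF_comp_vf:
  fixes \<tau> :: "('x::finite) cgm" and E :: "'x \<Rightarrow> 'x game \<Rightarrow> real"
  assumes \<tau>: "importance_inducing \<tau>" and E: "expectation_of_contributions E"
  shows "IVF (comp_vf E \<tau>)"
  unfolding IVF_def comp_vf_def
proof (intro conjI allI impI)
  fix x :: 'x and f
  have "0 \<le> pd x (\<tau> f) S" "pd x (\<tau> f) S \<le> 1" for S
    using \<tau> unfolding importance_inducing_def by blast+
  then show "0 \<le> E x (\<tau> f)" "E x (\<tau> f) \<le> 1"
    using expectation_of_contributions_bounds[OF E] by blast+
next
  fix x :: 'x and f
  assume "x \<notin> dep f"
  then show "E x (\<tau> f) = 0"
    by (intro expectation_of_contributions_const[OF E] pd_eq_0_if_notin_dep[OF \<tau>])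
next
  fix x :: 'x
  show "E x (\<tau> (var x)) = 1" "E x (\<tau> (\<lambda>u. \<not> var x u)) = 1"
    using \<tau> unfolding importance_inducing_def by (blast intro: expectation_of_contributions_const[OF E])+
next
  fix x :: 'x and f and \<sigma> :: "'x \<Rightarrow> 'x"
  assume "bij \<sigma>"
  moreover have "\<tau> (perm_bfun \<sigma> f) (\<sigma> ` S) = \<tau> f S" for S
    using \<tau> \<open>bij \<sigma>\<close> unfolding importance_inducing_def by metis
  ultimately show "E x (\<tau> f) = E (\<sigma> x) (\<tau> (perm_bfun \<sigma> f))"
    by (simp add: expectation_of_contributions_perm[OF E])
next
  fix x y :: 'x and f
  have "\<tau> (flip f y) = \<tau> f"
    using \<tau> unfolding importance_inducing_def by (simp add: fun_eq_iff)
  then show "E x (\<tau> f) = E x (\<tau> (flip f y))"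
    by simp
next
  fix x :: 'x and f g h
  assume "mono_modular f g \<and> mono_modular h g \<and> mod_cof h g True \<le> mod_cof f g True \<and>
    mod_cof f g False \<le> mod_cof h g False \<and> x \<in> dep g"
  then have "pd x (\<tau> h) \<le> pd x (\<tau> f)"
    using \<tau> unfolding importance_inducing_def by blast
  then show "E x (\<tau> h) \<le> E x (\<tau> f)"
    by (intro expectation_of_contributions_mono[OF E]) (simp add: le_fun_def)
qed

theorem mainTheorem11:
  fixes \<tau> :: "('x::finite) cgm" and E :: "'x \<Rightarrow> 'x game \<Rightarrow> real"
  assumes "importance_inducing \<tau>"
    and "expectation_of_contributions E"
  shows "IVF (comp_vf E \<tau>) \<and>
    (unbiased_cgm \<tau> \<longrightarrow> unbiased (comp_vf E \<tau>)) \<and>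
    (deriv_dependent_cgm \<tau> \<longrightarrow> deriv_dependent (comp_vf E \<tau>)) \<and>
    (chain_rule_decomp_cgm \<tau> \<longrightarrow> chain_rule_decomp (comp_vf banzhaf \<tau>)) \<and>
    (weak_chain_rule_decomp_cgm \<tau> \<longrightarrow> weak_chain_rule_decomp (comp_vf banzhaf \<tau>))"
proof (intro conjI impI)
  show "IVF (comp_vf E \<tau>)"
    using assms by (rule IVF_comp_vf)
  show "unbiased (comp_vf E \<tau>)" if "unbiased_cgm \<tau>"
    using that unfolding unbiased_cgm_def unbiased_def comp_vf_def by simp
  show "deriv_dependent (comp_vf E \<tau>)" if "deriv_dependent_cgm \<tau>"
    using that unfolding deriv_dependent_cgm_def deriv_dependent_def comp_vf_def le_fun_def
    by (blast intro: expectation_of_contributions_mono[OF assms(2)])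
  show "chain_rule_decomp (comp_vf banzhaf \<tau>)" if "chain_rule_decomp_cgm \<tau>"
    using that unfolding chain_rule_decomp_cgm_def chain_rule_decomp_def comp_vf_def
    by (blast intro: banzhaf_chain_rule[OF assms(1)])
  show "weak_chain_rule_decomp (comp_vf banzhaf \<tau>)" if "weak_chain_rule_decomp_cgm \<tau>"
    using that unfolding weak_chain_rule_decomp_cgm_def weak_chain_rule_decomp_def comp_vf_def
    by (blast intro: banzhaf_chain_rule[OF assms(1)] mono_modular_imp_modular)
qed

end
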